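(* If $n$ is a non-negative integer and $p$ is a positive integer, then $$\sum_{k = 1}^n \sum_{j = 0}^{k - 1} \frac{1}{(k - j)(n - j + p)} = \frac{1}{2}\left( H_n^2 - H_n^{(2)} \right) - \frac{1}{2}\left( H_{p - 1}^2 + H_{p - 1}^{(2)} \right) + H_{p - 1} \left( H_{p + n - 1} - H_n \right) + H_n \left( H_{p + n} - H_n \right) - \sum_{k = 1}^{p - 1} \frac{H_{k - 1}}{n + k}.$$ In particular, $$\sum_{k = 1}^n \sum_{j = 0}^{k - 1} \frac{1}{(k - j)(n + 1 - j)} = \frac{1}{2}\left( H_n^2 - H_n^{(2)} \right) + \frac{H_n}{n + 1}.$$
   Context: $H_n=\sum_{m=1}^n\frac1m$ and $H_n^{(2)}=\sum_{m=1}^n\frac1{m^2}$ (with $H_0=H_0^{(2)}=0$). Empty sums are zero. *)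

theory Defs
  imports "HOL-Analysis.Analysis"
begin

text \<open>Generalized harmonic number of order 2: H_n^(2) = sum_{m=1}^n 1/m^2 (H_0^(2) = 0).
  The ordinary harmonic number H_n is the library's harm n.\<close>
definition harm2 :: "nat \<Rightarrow> real" where
  "harm2 n = (\<Sum>m=1..n. 1 / (real m)^2)"

end

theory Submission
  imports Defs
begin

text \<open>Exchanging the order of summation turns the double sum into
  \<open>\<Sum>k=1..n. harm k / (k + p)\<close>.  Write \<open>p = q + 1\<close> and let \<open>f n q\<close> be the closed form
  minus this sum.  On the boundary lines \<open>n = 0\<close> and \<open>q = 0\<close> it vanishes because
  \<open>\<Sum>k=1..m. harm (k - 1) / k = ((harm m)\<^sup>2 - harm2 m) / 2\<close>.  The sums without a closed form
  drop out of the mixed difference \<open>f (n+1) (q+1) - f n (q+1) - f (n+1) q + f n q\<close>, and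
  after the recurrence \<open>harm (m+1) = harm m + 1/(m+1)\<close> all that remains of it is the
  partial-fraction identity \<open>(1/x + 1/y) / (x + y) = 1 / (x y)\<close> for \<open>x = n + 1\<close>, \<open>y = q + 1\<close>.
  Hence \<open>f\<close> vanishes identically; the second formula is the case \<open>p = 1\<close>.\<close>

lemma harm_Suc_divide: "(harm (Suc n) :: real) = harm n + 1 / real (Suc n)"
  by (simp add: harm_Suc divide_inverse)

lemma harm2_Suc: "harm2 (Suc n) = harm2 n + (1 / real (Suc n))\<^sup>2"
  by (simp add: harm2_def power_divide)

lemma harm2_0: "harm2 0 = 0"
  by (simp add: harm2_def)

lemma harm_square_diff_harm2_Suc:
  "((harm (Suc n))\<^sup>2 - harm2 (Suc n)) / 2 = ((harm n)\<^sup>2 - harm2 n) / 2 + harm n / real (Suc n)"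
proof -
  have "((h + e)\<^sup>2 - (t + e\<^sup>2)) / 2 = (h\<^sup>2 - t) / 2 + h * e" for h t e :: real
    by (simp add: power2_eq_square field_simps)
  then show ?thesis
    unfolding harm_Suc_divide harm2_Suc by simp
qed

lemma eq_0_by_mixed_differences:
  fixes f :: "nat \<Rightarrow> nat \<Rightarrow> 'a::ab_group_add"
  assumes "\<And>q. f 0 q = 0" and "\<And>n. f n 0 = 0"
    and "\<And>n q. f (Suc n) (Suc q) - f n (Suc q) = f (Suc n) q - f n q"
  shows "f n q = 0"
proof (induction n arbitrary: q)
  case 0
  show ?case by (fact assms(1))
next
  case (Suc n)
  note IH_n = Suc.IH
  show ?case
  proof (induction q)
    case 0
    show ?case by (fact assms(2))
  next
    case (Suc q)
    then show ?case using assms(3)[of n q] IH_n by simp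
  qed
qed

lemma sum_harm_pred_div: "(\<Sum>k=1..n. harm (k - 1) / real k) = ((harm n)\<^sup>2 - harm2 n) / 2"
proof (induction n)
  case 0
  show ?case by (simp add: harm2_0 harm_expand)
next
  case (Suc n)
  have "(\<Sum>k=1..Suc n. harm (k - 1) / real k) = ((harm n)\<^sup>2 - harm2 n) / 2 + harm n / real (Suc n)"
    using Suc.IH by simp
  also have "\<dots> = ((harm (Suc n))\<^sup>2 - harm2 (Suc n)) / 2"
    by (simp add: harm_square_diff_harm2_Suc)
  finally show ?case .
qed

lemma sum_harm_div_Suc:
  "(\<Sum>k=1..n. harm k / (real k + 1)) = ((harm n)\<^sup>2 - harm2 n) / 2 + harm n / (real n + 1)"
proof -
  have "(\<Sum>k=1..n. harm k / (real k + 1)) = (\<Sum>k=0..n. harm k / (real k + 1))"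
    by (simp add: sum.atLeast_Suc_atMost harm_expand)
  also have "\<dots> = (\<Sum>k=1..Suc n. harm (k - 1) / real k)"
    unfolding One_nat_def sum.shift_bounds_cl_Suc_ivl by (simp add: add.commute)
  also have "\<dots> = ((harm n)\<^sup>2 - harm2 n) / 2 + harm n / (real n + 1)"
    unfolding sum_harm_pred_div harm_square_diff_harm2_Suc by simp
  finally show ?thesis .
qed

lemma reciprocal_sum_divide_sum:
  fixes x y :: "'a::field"
  assumes "x \<noteq> 0" "y \<noteq> 0" "x + y \<noteq> 0"
  shows "(1 / x + 1 / y) / (x + y) = 1 / (x * y)"
proof -
  have "1 / x + 1 / y = (x + y) / (x * y)"
    using assms by (simp add: field_simps)
  then show ?thesis
    using assms by simp
qed

lemma sum_harm_div_shifted: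
  "(\<Sum>k=1..n. harm k / (real k + real (Suc q)))
     = (1/2) * ((harm n)\<^sup>2 - harm2 n) - (1/2) * ((harm q)\<^sup>2 + harm2 q)
       + harm q * (harm (q + n) - harm n) + harm n * (harm (Suc (q + n)) - harm n)
       - (\<Sum>k=1..q. harm (k - 1) / (real n + real k))"
proof -
  define f where "f n q =
      (1/2) * ((harm n)\<^sup>2 - harm2 n) - (1/2) * ((harm q)\<^sup>2 + harm2 q)
       + harm q * (harm (q + n) - harm n) + harm n * (harm (Suc (q + n)) - harm n)
       - (\<Sum>k=1..q. harm (k - 1) / (real n + real k))
       - (\<Sum>k=1..n. harm k / (real k + real (Suc q)))" for n q
  have "f n q = 0"
  proof (rule eq_0_by_mixed_differences)
    show "f 0 q = 0" for q
      using sum_harm_pred_div[of q]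
      by (simp add: f_def harm2_0 harm_expand power2_eq_square algebra_simps)
    show "f n 0 = 0" for n
      using sum_harm_div_Suc[of n]
      by (simp add: f_def harm2_0 harm_expand harm_Suc_divide field_simps)
    show "f (Suc n) (Suc q) - f n (Suc q) = f (Suc n) q - f n q" for n q
    proof -
      have "(1 / real (Suc n) + 1 / real (Suc q)) / (real (Suc n) + real (Suc q))
          = 1 / (real (Suc n) * real (Suc q))"
        by (rule reciprocal_sum_divide_sum) auto
      then show ?thesis
        unfolding f_def by (simp add: harm_Suc_divide algebra_simps add_divide_distrib)
    qed
  qed
  then show ?thesis by (simp add: f_def)
qed

lemma sum_inverse_diff_eq_harm:
  assumes "j \<le> n"
  shows "(\<Sum>k=Suc j..n. 1 / (real k - real j)) = harm (n - j)"
proof -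
  have "(\<Sum>k=Suc j..n. 1 / (real k - real j)) = (\<Sum>i=1..n-j. 1 / real i)"
    using assms sum.shift_bounds_cl_nat_ivl[of "\<lambda>k. 1 / (real k - real j)" 1 j "n - j"]
    by (simp add: add.commute)
  then show ?thesis
    by (simp add: harm_def divide_inverse)
qed

lemma sum_sum_eq_sum_harm_div:
  fixes c :: real
  shows "(\<Sum>k=1..n. \<Sum>j<k. 1 / ((real k - real j) * (c + real n - real j)))
       = (\<Sum>k=1..n. harm k / (real k + c))"
proof -
  have "(\<Sum>k=1..n. \<Sum>j<k. 1 / ((real k - real j) * (c + real n - real j)))
      = (\<Sum>k\<le>n. \<Sum>j<k. 1 / ((real k - real j) * (c + real n - real j)))"
    by (simp add: atMost_atLeast0 sum.atLeast_Suc_atMost)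
  also have "\<dots> = (\<Sum>j<n. \<Sum>k=Suc j..n. 1 / ((real k - real j) * (c + real n - real j)))"
    by (rule sum.nested_swap')
  also have "\<dots> = (\<Sum>j<n. harm (n - j) / (real (n - j) + c))"
  proof (rule sum.cong)
    fix j assume "j \<in> {..<n}"
    then have "j \<le> n" by simp
    have "(\<Sum>k=Suc j..n. 1 / ((real k - real j) * (c + real n - real j)))
        = (\<Sum>k=Suc j..n. 1 / (real k - real j)) / (c + real n - real j)"
      by (simp add: sum_divide_distrib)
    also have "\<dots> = harm (n - j) / (real (n - j) + c)"
      using \<open>j \<le> n\<close> by (simp add: sum_inverse_diff_eq_harm of_nat_diff algebra_simps)
    finally show "(\<Sum>k=Suc j..n. 1 / ((real k - real j) * (c + real n - real j)))
        = harm (n - j) / (real (n - j) + c)" .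
  qed simp
  also have "\<dots> = (\<Sum>j<n. harm (Suc j) / (real (Suc j) + c))"
    using sum.nat_diff_reindex[of "\<lambda>j. harm (Suc j) / (real (Suc j) + c)" n]
    by (simp add: Suc_diff_Suc)
  also have "\<dots> = (\<Sum>k=1..n. harm k / (real k + c))"
    by (simp add: sum.atLeast1_atMost_eq)
  finally show ?thesis .
qed

theorem proposition11:
  fixes n p :: nat
  assumes "p \<ge> 1"
  shows "((\<Sum>k=1..n. \<Sum>j=0..k-1. 1 / ((real k - real j) * (real n - real j + real p)))
         = (1/2) * ((harm n :: real)^2 - harm2 n)
           - (1/2) * ((harm (p-1) :: real)^2 + harm2 (p-1))
           + (harm (p-1) :: real) * (harm (p+n-1) - harm n)
           + (harm n :: real) * (harm (p+n) - harm n)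
           - (\<Sum>k=1..p-1. (harm (k-1) :: real) / (real n + real k)))
       \<and> ((\<Sum>k=1..n. \<Sum>j=0..k-1. 1 / ((real k - real j) * (real n + 1 - real j)))
         = (1/2) * ((harm n :: real)^2 - harm2 n) + (harm n :: real) / (real n + 1))"
proof -
  obtain q where p: "p = Suc q"
    using assms by (cases p) auto
  have "(\<Sum>j=0..k-1. g j) = (\<Sum>j<k. g j)" if "k \<in> {1..n}" for k and g :: "nat \<Rightarrow> real"
    using that by (intro sum.cong) auto
  then have double_sum: "(\<Sum>k=1..n. \<Sum>j=0..k-1. 1 / ((real k - real j) * (real n + c - real j)))
      = (\<Sum>k=1..n. harm k / (real k + c))" for c :: real
    using sum_sum_eq_sum_harm_div[of c n] by (simp add: algebra_simps)
  show ?thesis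
    using double_sum[of "real p"] sum_harm_div_shifted[where n=n and q=q]
      double_sum[of 1] sum_harm_div_Suc[of n]
    by (simp add: p diff_add_eq)
qed

end
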